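(* Let $\Lambda$ be a full-rank lattice in $\mathbb{R}^n$ and assume $B\ge 8n^{n/2}\,\nu(\Lambda)$. Let $X := (\Lambda\cap[0,B)^n)^n$ and $Y := \{(y_1,\dots,y_n)\in X \mid \operatorname{span}_{\mathbb{R}}(y_1,\dots,y_n)=\mathbb{R}^n\}$. Then $|Y|\ge \tfrac12 |X|$.
   Context: $\nu(\Lambda)=\sup_{x\in\mathbb{R}^n}\min_{\lambda\in\Lambda}\|x-\lambda\|_2$ is the covering radius of $\Lambda$. *)

theory Defs
  imports "HOL-Analysis.Analysis"
begin

definition full_rank_lattice :: "(real^'n) set \<Rightarrow> bool" where
  "full_rank_lattice L \<longleftrightarrow>
     (\<exists>b :: 'n \<Rightarrow> real^'n. inj b \<and> independent (range b) \<and>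
        L = {x. \<exists>c :: 'n \<Rightarrow> int. x = (\<Sum>i\<in>UNIV. of_int (c i) *\<^sub>R b i)})"

definition covering_radius :: "(real^'n) set \<Rightarrow> real" where
  "covering_radius L = (SUP x. INF l\<in>L. norm (x - l))"

end

theory Submission
  imports Defs
begin

text \<open>
  Let \<open>\<nu>\<close> be the covering radius and \<open>V\<close> the Voronoi cell of \<open>\<Lambda>\<close>, so that
  \<open>V \<subseteq> cball 0 \<nu>\<close>. Translating \<open>V\<close> by the lattice points in \<open>[0,B)\<^sup>n\<close> covers the cube
  \<open>(\<nu>, B - \<nu>)\<^sup>n\<close>, so \<open>(B - 2\<nu>)\<^sup>n \<le> |S| vol V\<close>. For the lattice points in a proper
  subspace \<open>W \<subseteq> u\<^sup>\<perp>\<close>, the translates of \<open>V\<close> are disjoint up to null sets and lie in the slab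
  \<open>|u \<bullet> y| \<le> \<nu> |u|\<close> inside \<open>[-\<nu>, B + \<nu>]\<^sup>n\<close>, of volume at most \<open>2 \<surd>n \<nu> (B + 2\<nu>)\<^sup>n\<^sup>-\<^sup>1\<close>.
  Hence a proper subspace contains only a small fraction of \<open>S\<close>. Choosing the vectors of a
  tuple one after the other, a non-spanning tuple has a vector in the span of its predecessors,
  and a union bound shows that at most half of the tuples fail to span; the hypothesis on \<open>B\<close>
  is exactly what makes the resulting numerical inequality hold.
\<close>

section \<open>Volumes of shears and slabs\<close>

lemma measure_shear:
  fixes S :: "(real^'n) set"
  assumes "m \<noteq> n" and S: "S \<in> lmeasurable"
  defines "f \<equiv> \<lambda>x::real^'n. \<chi> i. if i = m then x$m + x$n else x$i"
  shows "f ` S \<in> lmeasurable" and "measure lebesgue (f ` S) = measure lebesgue S"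
proof -
  have lin: "linear f"
    unfolding f_def by (rule linearI) (auto simp: vec_eq_iff algebra_simps)
  have "measure lebesgue (f ` cbox a b) = 1 * measure lebesgue (cbox a b)" for a b
  proof (cases "cbox a b = {}")
    case False
    txt \<open>\<open>measure_shear_interval\<close> needs a box with nonnegative corner, so translate first.\<close>
    have "cbox a b = (+) a ` cbox 0 (b - a)"
      using cbox_translation[of a 0 "b - a"] by simp
    then have "f ` cbox a b = (+) (f a) ` f ` cbox 0 (b - a)"
      by (simp add: image_image linear_add[OF lin])
    then have "measure lebesgue (f ` cbox a b) = measure lebesgue (f ` cbox 0 (b - a))"
      by (simp add: measure_translation)
    also have "\<dots> = measure lebesgue (cbox 0 (b - a))"
      unfolding f_def using False \<open>m \<noteq> n\<close>
      by (intro measure_shear_interval) (auto simp: interval_ne_empty_cart)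
    also have "\<dots> = measure lebesgue (cbox a b)"
      using False by (simp add: content_cbox_cart interval_ne_empty_cart)
    finally show ?thesis by simp
  qed simp
  then have "f ` S \<in> lmeasurable \<and> 1 * measure lebesgue S = measure lebesgue (f ` S)"
    by (rule measure_linear_sufficient[OF lin S])
  then show "f ` S \<in> lmeasurable" and "measure lebesgue (f ` S) = measure lebesgue S"
    by simp_all
qed

lemma measure_sum_shear:
  fixes S :: "(real^'n) set"
  assumes "i \<notin> J" and S: "S \<in> lmeasurable"
  defines "f \<equiv> \<lambda>x::real^'n. \<chi> k. if k = i then x$i + (\<Sum>j\<in>J. x$j) else x$k"
  shows "f ` S \<in> lmeasurable \<and> measure lebesgue (f ` S) = measure lebesgue S"
  using finite[of J] \<open>i \<notin> J\<close> unfolding f_def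
proof (induction J rule: finite_induct)
  case empty
  have "(\<lambda>x::real^'n. \<chi> k. if k = i then x$i + (\<Sum>j\<in>{}. x$j) else x$k) = (\<lambda>x. x)"
    by (simp add: fun_eq_iff vec_eq_iff)
  then show ?case using S by (simp only: image_ident)
next
  case (insert j J)
  let ?g = "\<lambda>x::real^'n. \<chi> k. if k = i then x$i + (\<Sum>j\<in>J. x$j) else x$k"
  let ?h = "\<lambda>x::real^'n. \<chi> k. if k = i then x$i + x$j else x$k"
  have "j \<noteq> i" using insert.prems by blast
  have g: "?g ` S \<in> lmeasurable" "measure lebesgue (?g ` S) = measure lebesgue S"
    using insert by auto
  have "(\<lambda>x::real^'n. \<chi> k. if k = i then x$i + (\<Sum>j\<in>insert j J. x$j) else x$k) ` S
      = ?h ` ?g ` S"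
    using insert.hyps \<open>j \<noteq> i\<close> by (force simp: image_image vec_eq_iff algebra_simps intro!: image_cong)
  then show ?case
    using measure_shear[OF \<open>j \<noteq> i\<close>[symmetric] g(1)] g(2) by simp
qed

lemma measure_replace_coordinate_by_inner:
  fixes u :: "real^'n" and S :: "(real^'n) set"
  assumes ui: "u$i \<noteq> 0" and S: "S \<in> lmeasurable"
  defines "\<phi> \<equiv> \<lambda>y. \<chi> k. if k = i then u \<bullet> y else y$k"
  shows "\<phi> ` S \<in> lmeasurable" and "measure lebesgue (\<phi> ` S) = \<bar>u$i\<bar> * measure lebesgue S"
proof -
  define c where "c k = (if u$k = 0 then 1 else u$k)" for k
  define e where "e k = (if k = i then 1 else 1 / c k)" for k
  define J where "J = {j. j \<noteq> i \<and> u$j \<noteq> 0}"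
  define D where "D y = (\<chi> k. c k * y$k)" for y :: "real^'n"
  define \<sigma> where "\<sigma> x = (\<chi> k. if k = i then x$i + (\<Sum>j\<in>J. x$j) else x$k)" for x :: "real^'n"
  define E where "E y = (\<chi> k. e k * y$k)" for y :: "real^'n"
  txt \<open>\<open>\<phi>\<close> factors as: \<open>D\<close> scales each coordinate \<open>k\<close> by \<open>u$k\<close> (when nonzero), \<open>\<sigma>\<close> adds
    the scaled coordinates into coordinate \<open>i\<close>, and \<open>E\<close> undoes the scaling away from \<open>i\<close>.\<close>
  have "(\<Sum>k\<in>UNIV. u$k * y$k) = u$i * y$i + (\<Sum>k\<in>UNIV - {i}. u$k * y$k)" for y
    by (simp add: sum.remove[of UNIV i])
  moreover have "(\<Sum>k\<in>UNIV - {i}. u$k * y$k) = (\<Sum>k\<in>J. u$k * y$k)" for y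
    by (rule sum.mono_neutral_right) (auto simp: J_def)
  ultimately have \<phi>: "\<phi> = E \<circ> \<sigma> \<circ> D"
    using ui by (simp add: fun_eq_iff vec_eq_iff \<phi>_def E_def e_def \<sigma>_def D_def c_def J_def inner_vec_def)
  have "\<bar>prod e UNIV\<bar> * \<bar>prod c UNIV\<bar> = \<bar>\<Prod>k\<in>UNIV. e k * c k\<bar>"
    by (simp add: prod.distrib abs_mult)
  also have "(\<Prod>k\<in>UNIV. e k * c k) = (\<Prod>k\<in>UNIV. if k = i then u$i else 1)"
    using ui by (intro prod.cong) (auto simp: e_def c_def)
  finally have "\<bar>prod e UNIV\<bar> * \<bar>prod c UNIV\<bar> = \<bar>u$i\<bar>"
    by simp
  moreover have "D ` S \<in> lmeasurable" "measure lebesgue (D ` S) = \<bar>prod c UNIV\<bar> * measure lebesgue S"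
    unfolding D_def using S by (simp_all add: measurable_stretch measure_stretch)
  moreover from this have "\<sigma> ` D ` S \<in> lmeasurable" "measure lebesgue (\<sigma> ` D ` S) = measure lebesgue (D ` S)"
    unfolding \<sigma>_def using measure_sum_shear[of i J] by (auto simp: J_def)
  ultimately show "\<phi> ` S \<in> lmeasurable" "measure lebesgue (\<phi> ` S) = \<bar>u$i\<bar> * measure lebesgue S"
    unfolding \<phi> image_comp[symmetric] E_def by (simp_all add: measurable_stretch measure_stretch)
qed

lemma measure_slab:
  fixes u :: "real^'n"
  assumes ui: "u$i \<noteq> 0" and "lo \<le> hi" and "0 \<le> \<delta>"
  defines "A \<equiv> {y. (\<forall>j. lo \<le> y$j \<and> y$j \<le> hi) \<and> \<bar>u \<bullet> y\<bar> \<le> \<delta>}"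
  shows "A \<in> lmeasurable" and "\<bar>u$i\<bar> * measure lebesgue A \<le> 2 * \<delta> * (hi - lo) ^ (CARD('n) - 1)"
proof -
  define \<phi> where "\<phi> y = (\<chi> k. if k = i then u \<bullet> y else y$k)" for y :: "real^'n"
  define a where "a = (\<chi> k. if k = i then - \<delta> else lo)"
  define b where "b = (\<chi> k. if k = i then \<delta> else hi)"
  have "A = cbox (\<chi> j. lo) (\<chi> j. hi) \<inter> {y. \<bar>u \<bullet> y\<bar> \<le> \<delta>}"
    by (auto simp: A_def mem_box_cart)
  moreover have "closed {y::real^'n. \<bar>u \<bullet> y\<bar> \<le> \<delta>}"
    by (intro closed_Collect_le continuous_intros)
  ultimately show A: "A \<in> lmeasurable"
    by (simp add: lmeasurable_compact compact_Int_closed)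
  have "\<phi> ` A \<subseteq> cbox a b"
    by (auto simp: A_def \<phi>_def a_def b_def mem_box_cart abs_le_iff)
  then have "measure lebesgue (\<phi> ` A) \<le> measure lebesgue (cbox a b)"
    using measure_replace_coordinate_by_inner[OF ui A] by (intro measure_mono_fmeasurable) (auto simp: \<phi>_def)
  also have "\<dots> = 2 * \<delta> * (hi - lo) ^ (CARD('n) - 1)"
    using assms by (simp add: content_cbox_cart interval_ne_empty_cart a_def b_def prod.remove[of UNIV i]
        card_Diff_singleton)
  finally show "\<bar>u$i\<bar> * measure lebesgue A \<le> 2 * \<delta> * (hi - lo) ^ (CARD('n) - 1)"
    using measure_replace_coordinate_by_inner[OF ui A] by (simp add: \<phi>_def)
qed

lemma exists_dominant_component:
  fixes u :: "real^'n"
  assumes "u \<noteq> 0"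
  obtains i where "u$i \<noteq> 0" and "norm u \<le> sqrt (real CARD('n)) * \<bar>u$i\<bar>"
proof -
  have "Max (range (\<lambda>j. \<bar>u$j\<bar>)) \<in> range (\<lambda>j. \<bar>u$j\<bar>)"
    by (rule Max_in) auto
  then obtain i where "\<bar>u$i\<bar> = Max (range (\<lambda>j. \<bar>u$j\<bar>))"
    by (metis rangeE)
  then have max: "\<bar>u$j\<bar> \<le> \<bar>u$i\<bar>" for j
    by simp
  have "norm u = sqrt (\<Sum>j\<in>UNIV. (u$j)\<^sup>2)"
    by (simp add: norm_vec_def L2_set_def)
  also have "\<dots> \<le> sqrt (\<Sum>j\<in>(UNIV::'n set). (u$i)\<^sup>2)"
    using max by (intro real_sqrt_le_mono sum_mono) (simp add: abs_le_square_iff)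
  also have "\<dots> = sqrt (real CARD('n)) * \<bar>u$i\<bar>"
    by (simp add: real_sqrt_mult)
  finally have "norm u \<le> sqrt (real CARD('n)) * \<bar>u$i\<bar>" .
  moreover have "u$i \<noteq> 0"
  proof
    assume "u$i = 0"
    then have "u$j = 0" for j
      using max[of j] by simp
    with assms show False
      by (simp add: vec_eq_iff)
  qed
  ultimately show thesis
    using that by blast
qed

section \<open>The numerical inequality\<close>

lemma power_add_le_two_mul_power:
  fixes a d :: real
  assumes a: "0 < a" and d: "0 \<le> d" and k: "2 * real k * d \<le> a"
  shows "(a + d) ^ k \<le> 2 * a ^ k"
proof -
  have "(1 + d / a) ^ k \<le> exp (d / a) ^ k"
    using a d by (intro power_mono) auto
  also have "\<dots> = exp (real k * (d / a))"
    by (rule exp_of_nat_mult[symmetric])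
  also have "\<dots> \<le> exp (1/2)"
    using a k by (simp add: field_simps)
  also have "\<dots> \<le> 2"
  proof -
    have "exp (1/2::real) ^ 2 = exp 1"
      by (simp flip: exp_of_nat_mult)
    also have "\<dots> \<le> 2 ^ 2"
      using exp_le by simp
    finally show ?thesis
      by (rule power2_le_imp_le) simp
  qed
  finally have "a ^ k * (1 + d / a) ^ k \<le> a ^ k * 2"
    using a by (intro mult_left_mono) auto
  moreover have "a ^ k * (1 + d / a) ^ k = (a + d) ^ k"
    using a by (simp add: power_mult_distrib[symmetric] field_simps)
  ultimately show ?thesis
    by simp
qed

lemma lattice_count_inequality_sqrt:
  fixes \<nu> B :: real
  assumes n: "1 \<le> n" and \<nu>: "0 < \<nu>" and B: "8 * real n * sqrt (real n) * \<nu> \<le> B"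
  shows "(2 * \<nu>) ^ n + real (n - 1) * (2 * sqrt (real n) * \<nu> * (B + 2 * \<nu>) ^ (n - 1))
           \<le> (B - 2 * \<nu>) ^ n / 2"
proof -
  define a where "a = B - 2 * \<nu>"
  have "\<nu> \<le> sqrt (real n) * \<nu>" and "8 * \<nu> \<le> 8 * real n * \<nu>"
    using n \<nu> by simp_all
  then have B8: "8 * real n * \<nu> \<le> B"
    using B mult_left_mono[OF \<open>\<nu> \<le> sqrt (real n) * \<nu>\<close>, of "8 * real n"] by (simp add: mult_ac)
  moreover have "8 * real (n - 1) * \<nu> = 8 * real n * \<nu> - 8 * \<nu>"
    using n by (simp add: algebra_simps)
  ultimately have a_ge: "2 * real (n - 1) * (4 * \<nu>) \<le> a"
    using \<nu> unfolding a_def by linarith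
  have "2 * \<nu> \<le> a"
    using \<open>8 * \<nu> \<le> 8 * real n * \<nu>\<close> B8 \<nu> unfolding a_def by linarith
  then have a: "0 < a"
    using \<nu> by linarith
  have big: "(B + 2 * \<nu>) ^ (n - 1) \<le> 2 * a ^ (n - 1)"
    using power_add_le_two_mul_power[OF a _ a_ge] \<nu> by (simp add: a_def add.commute)
  have small: "(2 * \<nu>) ^ n \<le> 2 * \<nu> * a ^ (n - 1)"
    using n \<nu> \<open>2 * \<nu> \<le> a\<close> power_mono[of "2 * \<nu>" a "n - 1"]
    by (cases n) (auto intro: mult_left_mono)
  have "4 * \<nu> * (1 + 2 * real (n - 1) * sqrt (real n))
      = 4 * \<nu> + 8 * real n * sqrt (real n) * \<nu> - 8 * (sqrt (real n) * \<nu>)"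
    using n by (simp add: algebra_simps)
  also have "\<dots> \<le> a"
    using B \<open>\<nu> \<le> sqrt (real n) * \<nu>\<close> \<nu> unfolding a_def by linarith
  finally have key: "4 * \<nu> * (1 + 2 * real (n - 1) * sqrt (real n)) \<le> a" .
  have "(2 * \<nu>) ^ n + real (n - 1) * (2 * sqrt (real n) * \<nu> * (B + 2 * \<nu>) ^ (n - 1))
      \<le> 2 * \<nu> * a ^ (n - 1) + real (n - 1) * (2 * sqrt (real n) * \<nu> * (2 * a ^ (n - 1)))"
    using small big \<nu> by (intro add_mono mult_left_mono) auto
  also have "\<dots> = a ^ (n - 1) * (2 * \<nu> * (1 + 2 * real (n - 1) * sqrt (real n)))"
    by (simp add: algebra_simps)
  also have "\<dots> \<le> a ^ (n - 1) * (a / 2)"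
    using key a by (intro mult_left_mono) auto
  also have "\<dots> = (B - 2 * \<nu>) ^ n / 2"
    using n by (simp add: a_def power_eq_if)
  finally show ?thesis .
qed

lemma lattice_count_inequality:
  fixes \<nu> B :: real
  assumes n: "1 \<le> n" and \<nu>: "0 < \<nu>" and B: "8 * real n powr (real n / 2) * \<nu> \<le> B"
  shows "(2 * \<nu>) ^ n + real (n - 1) * (2 * sqrt (real n) * \<nu> * (B + 2 * \<nu>) ^ (n - 1))
           \<le> (B - 2 * \<nu>) ^ n / 2"
proof (cases "n = 2")
  case True
  then have B16: "16 * \<nu> \<le> B"
    using B by simp
  have "sqrt 2 \<le> (3/2 :: real)"
    by (rule real_le_lsqrt) (auto simp: power2_eq_square)
  then have "2 * sqrt 2 * \<nu> * (B + 2 * \<nu>) \<le> 3 * \<nu> * (B + 2 * \<nu>)"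
    using \<nu> B16 by (intro mult_right_mono) auto
  moreover have "0 \<le> (B - 16 * \<nu>) * (B + 6 * \<nu>)"
    using B16 \<nu> by simp
  moreover have "0 < \<nu> * \<nu>"
    using \<nu> by simp
  ultimately show ?thesis
    by (simp add: True power2_eq_square algebra_simps)
next
  case False
  have "real n * sqrt (real n) = real n powr (1 + 1/2)"
    by (subst powr_add) (use n in \<open>simp add: powr_half_sqrt\<close>)
  also have "\<dots> \<le> real n powr (real n / 2)"
  proof (cases "n = 1")
    case False
    then have "3 \<le> n"
      using n \<open>n \<noteq> 2\<close> by linarith
    then show ?thesis
      by (intro powr_mono) auto
  qed simp
  finally have "8 * (real n * sqrt (real n)) * \<nu> \<le> 8 * real n powr (real n / 2) * \<nu>"
    using \<nu> by simp
  then have "8 * real n * sqrt (real n) * \<nu> \<le> B"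
    using B by (simp add: mult.assoc)
  then show ?thesis
    by (rule lattice_count_inequality_sqrt[OF n \<nu>])
qed

section \<open>Counting non-spanning tuples\<close>

lemma card_tuples_constrained_coordinate:
  fixes S :: "'a set" and F :: "('n::finite \<Rightarrow> 'a) \<Rightarrow> 'a set"
  assumes "finite S" and "\<And>z. real (card (S \<inter> F z)) \<le> r"
  shows "real (card {y. (\<forall>i. y i \<in> S) \<and> y k \<in> F (y(k := c))}) \<le> real (card S) ^ (CARD('n) - 1) * r"
proof -
  define Z where "Z = PiE UNIV (\<lambda>j. if j = k then {c} else S)"
  have finZ: "finite Z"
    unfolding Z_def using assms(1) by (intro finite_PiE) auto
  have cardZ: "card Z = card S ^ (CARD('n) - 1)"
    by (simp add: Z_def card_PiE prod.remove[of UNIV k] card_Diff_singleton prod.If_cases)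
  have "{y. (\<forall>i. y i \<in> S) \<and> y k \<in> F (y(k := c))} \<subseteq> (\<lambda>(z, v). z(k := v)) ` (SIGMA z:Z. S \<inter> F z)"
  proof
    fix y assume y: "y \<in> {y. (\<forall>i. y i \<in> S) \<and> y k \<in> F (y(k := c))}"
    then have "(y(k := c), y k) \<in> (SIGMA z:Z. S \<inter> F z)"
      by (auto simp: Z_def PiE_UNIV_domain)
    then show "y \<in> (\<lambda>(z, v). z(k := v)) ` (SIGMA z:Z. S \<inter> F z)"
      by (rule image_eqI[rotated]) simp
  qed
  then have "card {y. (\<forall>i. y i \<in> S) \<and> y k \<in> F (y(k := c))} \<le> card (SIGMA z:Z. S \<inter> F z)"
    using finZ assms(1) by (meson card_image_le card_mono finite_SigmaI finite_Int finite_imageI order_trans)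
  also have "\<dots> = (\<Sum>z\<in>Z. card (S \<inter> F z))"
    using finZ assms(1) by simp
  finally have "real (card {y. (\<forall>i. y i \<in> S) \<and> y k \<in> F (y(k := c))}) \<le> (\<Sum>z\<in>Z. real (card (S \<inter> F z)))"
    by (simp flip: of_nat_sum)
  also have "\<dots> \<le> real (card Z) * r"
    using sum_mono[of Z "\<lambda>z. real (card (S \<inter> F z))" "\<lambda>_. r"] assms(2) by simp
  finally show ?thesis
    by (simp add: cardZ)
qed

lemma span_eq_UNIV_if_not_in_span_of_predecessors:
  fixes y :: "'n \<Rightarrow> real^'n" and e :: "'n \<Rightarrow> nat"
  assumes e: "bij_betw e UNIV {..<CARD('n)}"
    and y: "\<And>k. y k \<notin> span (y ` {j. e j < e k})"
  shows "span (range y) = UNIV"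
proof -
  have "dim (y ` {j. e j < m}) = m" if "m \<le> CARD('n)" for m
    using that
  proof (induction m)
    case (Suc m)
    then obtain k where k: "e k = m"
      using e by (metis bij_betw_iff_bijections lessThan_iff Suc_le_lessD)
    then have "{j. e j < Suc m} = insert k {j. e j < m}"
      using e by (auto simp: less_Suc_eq bij_betw_def inj_eq)
    then show ?case
      using Suc y[of k] k by (simp add: dim_insert)
  qed simp
  moreover have "{j. e j < CARD('n)} = UNIV"
    using e by (auto simp: bij_betw_def)
  ultimately have "dim (range y) = DIM(real^'n)"
    by (metis order_refl DIM_cart DIM_real mult_1_right)
  then show ?thesis
    by (simp only: dim_eq_full)
qed

lemma card_Int_span_image_le:
  fixes S :: "(real^'n) set" and z :: "'n \<Rightarrow> real^'n"
  assumes "k \<notin> J" and r: "\<And>W. dim W < CARD('n) \<Longrightarrow> real (card (S \<inter> W)) \<le> r"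
  shows "real (card (S \<inter> span (z ` J))) \<le> r"
proof (rule r)
  have "dim (span (z ` J)) \<le> card (z ` J)"
    using dim_le_card'[of "z ` J"] by simp
  also have "\<dots> \<le> card (UNIV - {k})"
    using assms(1) card_image_le[of J z] card_mono[of "UNIV - {k}" J] by fastforce
  also have "\<dots> < CARD('n)"
    by (simp add: card_Diff_singleton)
  finally show "dim (span (z ` J)) < CARD('n)" .
qed

text \<open>In a non-spanning tuple some vector lies in the span of its predecessors; for the first
  vector that span is \<open>{0}\<close>, for every later one it is a proper subspace.\<close>
lemma card_nonspanning_tuples:
  fixes S :: "(real^'n) set"
  assumes S: "finite S"
    and r: "\<And>W. dim W < CARD('n) \<Longrightarrow> real (card (S \<inter> W)) \<le> r"
  shows "real (card {y :: 'n \<Rightarrow> real^'n. (\<forall>i. y i \<in> S) \<and> span (range y) \<noteq> UNIV})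
           \<le> real (card S) ^ (CARD('n) - 1) * (1 + real (CARD('n) - 1) * r)"
    (is "real (card ?N) \<le> _")
proof -
  obtain e :: "'n \<Rightarrow> nat" where e: "bij_betw e UNIV {..<CARD('n)}"
    using ex_bij_betw_finite_nat[of "UNIV :: 'n set"] by (auto simp: atLeast0LessThan)
  then have "0 \<in> e ` UNIV"
    by (simp add: bij_betw_def)
  then obtain k0 where k0: "e k0 = 0"
    by (metis imageE)
  define \<rho> where "\<rho> k = (if k = k0 then 1 else r)" for k :: 'n
  define A where "A k = {y :: 'n \<Rightarrow> real^'n. (\<forall>i. y i \<in> S) \<and> y k \<in> span ((y(k := 0)) ` {j. e j < e k})}" for k
  have sub: "?N \<subseteq> (\<Union>k. A k)"
  proof
    fix y :: "'n \<Rightarrow> real^'n"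
    assume y: "y \<in> ?N"
    then obtain k :: 'n where "y k \<in> span (y ` {j. e j < e k})"
      using span_eq_UNIV_if_not_in_span_of_predecessors[OF e, of y] by blast
    moreover have "(y(k := 0)) ` {j. e j < e k} = y ` {j. e j < e k}"
      by auto
    ultimately have "y \<in> A k"
      using y by (simp add: A_def)
    then show "y \<in> (\<Union>k. A k)"
      by blast
  qed
  have "finite (A k)" for k
  proof (rule finite_subset)
    show "A k \<subseteq> PiE UNIV (\<lambda>_. S)"
      by (auto simp: A_def PiE_UNIV_domain)
    show "finite (PiE (UNIV :: 'n set) (\<lambda>_. S))"
      by (rule finite_PiE) (simp_all add: S)
  qed
  then have "card ?N \<le> card (\<Union>k. A k)"
    using sub by (intro card_mono) auto
  also have "\<dots> \<le> (\<Sum>k\<in>UNIV. card (A k))"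
    by (rule card_UN_le) simp
  finally have "real (card ?N) \<le> (\<Sum>k\<in>UNIV. real (card (A k)))"
    by (simp flip: of_nat_sum)
  also have "\<dots> \<le> (\<Sum>k\<in>UNIV. real (card S) ^ (CARD('n) - 1) * \<rho> k)"
  proof (intro sum_mono)
    fix k :: 'n
    have "real (card (S \<inter> span (z ` {j. e j < e k}))) \<le> \<rho> k" for z
    proof (cases "k = k0")
      case True
      then have "S \<inter> span (z ` {j. e j < e k}) \<subseteq> {0}"
        using k0 by simp
      then have "card (S \<inter> span (z ` {j. e j < e k})) \<le> card {0 :: real^'n}"
        by (rule card_mono[rotated]) simp
      then show ?thesis
        using True by (simp add: \<rho>_def)
    next
      case False
      then show ?thesis
        using card_Int_span_image_le[of k "{j. e j < e k}" S r z] r by (simp add: \<rho>_def)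
    qed
    then show "real (card (A k)) \<le> real (card S) ^ (CARD('n) - 1) * \<rho> k"
      unfolding A_def by (rule card_tuples_constrained_coordinate[OF S])
  qed
  also have "\<dots> = real (card S) ^ (CARD('n) - 1) * (1 + real (CARD('n) - 1) * r)"
    by (simp add: sum_distrib_left[symmetric] sum.remove[of UNIV k0] \<rho>_def card_Diff_singleton)
  finally show ?thesis .
qed

section \<open>Lattices, covering radius and Voronoi cells\<close>

lemma full_rank_lattice_linear_image:
  assumes "full_rank_lattice (L :: (real^'n) set)"
  obtains T :: "real^'n \<Rightarrow> real^'n" where "linear T" "inj T" "L = T ` {t. \<forall>i. t$i \<in> \<int>}"
proof -
  obtain b :: "'n \<Rightarrow> real^'n" where b: "inj b" "independent (range b)"
    and L: "L = {x. \<exists>c :: 'n \<Rightarrow> int. x = (\<Sum>i\<in>UNIV. of_int (c i) *\<^sub>R b i)}"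
    using assms unfolding full_rank_lattice_def by blast
  define T where "T t = (\<Sum>i\<in>UNIV. (t$i) *\<^sub>R b i)" for t :: "real^'n"
  have lin: "linear T"
    unfolding T_def by (intro linear_compose_sum) (auto intro!: linearI simp: algebra_simps)
  have "t = 0" if "T t = 0" for t
  proof -
    have "(\<Sum>v\<in>range b. t $ inv b v *\<^sub>R v) = T t"
      by (simp add: sum.reindex[OF b(1)] T_def inv_f_f[OF b(1)])
    then have "\<forall>v\<in>range b. t $ inv b v = 0"
      using b(2) that by (auto simp: independent_explicit)
    then show "t = 0"
      by (simp add: vec_eq_iff inv_f_f[OF b(1)])
  qed
  then have "inj T"
    using lin by (simp add: linear_inj_iff_eq_0)
  moreover have "L = T ` {t. \<forall>i. t$i \<in> \<int>}"
  proof (intro equalityI subsetI)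
    fix x assume "x \<in> L"
    then obtain c :: "'n \<Rightarrow> int" where "x = T (\<chi> i. of_int (c i))"
      by (auto simp: L T_def)
    then show "x \<in> T ` {t. \<forall>i. t$i \<in> \<int>}"
      by auto
  next
    fix x assume "x \<in> T ` {t. \<forall>i. t$i \<in> \<int>}"
    then obtain t where t: "\<forall>i. t$i \<in> \<int>" "x = T t"
      by blast
    then have "x = (\<Sum>i\<in>UNIV. of_int \<lfloor>t$i\<rfloor> *\<^sub>R b i)"
      by (simp add: T_def)
    then show "x \<in> L"
      by (auto simp: L)
  qed
  ultimately show thesis
    using that lin by blast
qed

lemma finite_integer_points_bounded:
  assumes "bounded C"
  shows "finite {t::real^'n. (\<forall>i. t$i \<in> \<int>) \<and> t \<in> C}"
proof -
  obtain r where r: "\<And>t. t \<in> C \<Longrightarrow> norm t \<le> r"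
    using assms by (auto simp: bounded_iff)
  have sub: "{t::real^'n. (\<forall>i. t$i \<in> \<int>) \<and> t \<in> C} \<subseteq> vec_lambda ` (PiE UNIV (\<lambda>_. {k \<in> \<int>. \<bar>k\<bar> \<le> r}))"
  proof
    fix t :: "real^'n" assume t: "t \<in> {t. (\<forall>i. t$i \<in> \<int>) \<and> t \<in> C}"
    then have "t$i \<in> \<int> \<and> \<bar>t$i\<bar> \<le> r" for i
      using r[of t] component_le_norm_cart[of t i] by auto
    then have "(\<lambda>i. t$i) \<in> PiE UNIV (\<lambda>_. {k \<in> \<int>. \<bar>k\<bar> \<le> r})"
      by (simp add: PiE_UNIV_domain)
    then show "t \<in> vec_lambda ` (PiE UNIV (\<lambda>_. {k \<in> \<int>. \<bar>k\<bar> \<le> r}))"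
      by (rule image_eqI[rotated]) simp
  qed
  have "finite (PiE (UNIV :: 'n set) (\<lambda>_. {k \<in> \<int>. \<bar>k\<bar> \<le> r}))"
    by (simp add: finite_PiE finite_abs_int_segment)
  then show ?thesis
    by (rule finite_subset[OF sub finite_imageI])
qed

definition voronoi_cell :: "'a::real_normed_vector set \<Rightarrow> 'a set" where
  "voronoi_cell L = {v. \<forall>l\<in>L. norm v \<le> norm (v - l)}"

definition strict_voronoi_cell :: "'a::real_normed_vector set \<Rightarrow> 'a set" where
  "strict_voronoi_cell L = {v. \<forall>l\<in>L - {0}. norm v < norm (v - l)}"

definition box_lattice_points :: "(real^'n) set \<Rightarrow> real \<Rightarrow> (real^'n) set" where
  "box_lattice_points L B = {v \<in> L. \<forall>j. 0 \<le> v$j \<and> v$j < B}"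

context
  fixes L :: "(real^'n) set"
  assumes L: "full_rank_lattice L"
begin

lemma lattice_zero: "0 \<in> L"
proof -
  obtain T :: "real^'n \<Rightarrow> real^'n" where "linear T" "inj T" "L = T ` {t. \<forall>i. t$i \<in> \<int>}"
    using L by (rule full_rank_lattice_linear_image)
  then show ?thesis
    by (auto intro!: image_eqI[of _ _ 0] simp: linear_0)
qed

lemma lattice_diff: "x \<in> L \<Longrightarrow> y \<in> L \<Longrightarrow> x - y \<in> L"
proof -
  obtain T :: "real^'n \<Rightarrow> real^'n" where T: "linear T" "inj T" "L = T ` {t. \<forall>i. t$i \<in> \<int>}"
    using L by (rule full_rank_lattice_linear_image)
  assume "x \<in> L" "y \<in> L"
  then obtain s t where "x = T s" "y = T t" "\<forall>i. s$i \<in> \<int>" "\<forall>i. t$i \<in> \<int>"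
    using T(3) by blast
  then show ?thesis
    using T by (auto intro!: image_eqI[of _ _ "s - t"] simp: linear_diff)
qed

lemma lattice_add: "x \<in> L \<Longrightarrow> y \<in> L \<Longrightarrow> x + y \<in> L"
  using lattice_diff[of x "0 - y"] lattice_diff[OF lattice_zero, of y] by simp

lemma finite_lattice_Int_bounded:
  assumes "bounded A"
  shows "finite (L \<inter> A)"
proof -
  obtain T :: "real^'n \<Rightarrow> real^'n" where T: "linear T" "inj T" "L = T ` {t. \<forall>i. t$i \<in> \<int>}"
    using L by (rule full_rank_lattice_linear_image)
  have "linear (inv T)"
    using T(1,2) by (rule inj_linear_imp_inv_linear)
  then have "bounded (inv T ` A)"
    using assms by (simp add: bounded_linear_image linear_conv_bounded_linear)
  then have "finite (T ` {t. (\<forall>i. t$i \<in> \<int>) \<and> t \<in> inv T ` A})"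
    by (intro finite_imageI finite_integer_points_bounded)
  moreover have "L \<inter> A \<subseteq> T ` {t. (\<forall>i. t$i \<in> \<int>) \<and> t \<in> inv T ` A}"
  proof
    fix x assume "x \<in> L \<inter> A"
    then obtain t where t: "x = T t" "\<forall>i. t$i \<in> \<int>" "x \<in> A"
      using T(3) by blast
    then have "t \<in> inv T ` A"
      using inv_f_f[OF T(2)] by (metis image_eqI)
    then show "x \<in> T ` {t. (\<forall>i. t$i \<in> \<int>) \<and> t \<in> inv T ` A}"
      using t by blast
  qed
  ultimately show ?thesis
    by (rule finite_subset[rotated])
qed

lemma countable_lattice: "countable L"
proof -
  have "L = (\<Union>k::nat. L \<inter> cball 0 (real k))"
    by (auto intro: real_arch_simple)
  moreover have "countable (L \<inter> cball 0 (real k))" for k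
    by (simp add: countable_finite finite_lattice_Int_bounded)
  ultimately show ?thesis
    by (metis countable_UN countableI_type)
qed

lemma lattice_bounded_distance: "\<exists>R. \<forall>x. \<exists>l\<in>L. norm (x - l) \<le> R"
proof -
  obtain T :: "real^'n \<Rightarrow> real^'n" where T: "linear T" "inj T" "L = T ` {t. \<forall>i. t$i \<in> \<int>}"
    using L by (rule full_rank_lattice_linear_image)
  obtain K where K: "\<And>v. norm (T v) \<le> K * norm v" "0 < K"
    using linear_bounded_pos[OF T(1)] by blast
  have "\<exists>l\<in>L. norm (x - l) \<le> K * CARD('n)" for x
  proof -
    obtain t where x: "x = T t"
      using T(1,2) linear_injective_imp_surjective by (metis surjD)
    define s :: "real^'n" where "s = (\<chi> i. of_int \<lfloor>t$i\<rfloor>)"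
    have "T s \<in> L"
      by (auto simp: T(3) s_def)
    have "norm (t - s) \<le> (\<Sum>i\<in>UNIV. \<bar>(t - s)$i\<bar>)"
      by (rule norm_le_l1_cart)
    also have "\<dots> \<le> (\<Sum>i\<in>(UNIV::'n set). 1)"
      by (intro sum_mono) (simp add: s_def; linarith)
    finally have "norm (x - T s) \<le> K * CARD('n)"
      using K by (simp add: x linear_diff[OF T(1), symmetric]) (meson mult_left_mono order_trans less_imp_le)
    with \<open>T s \<in> L\<close> show ?thesis
      by blast
  qed
  then show ?thesis
    by blast
qed

lemma closed_lattice: "closed L"
  unfolding closed_limpt
proof (intro allI impI)
  fix x assume "x islimpt L"
  then have "infinite (L \<inter> ball x 1)"
    by (simp add: islimpt_eq_infinite_ball)
  then show "x \<in> L"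
    using finite_lattice_Int_bounded[of "ball x 1"] by simp
qed

lemma nearest_lattice_point:
  obtains l where "l \<in> L" "\<And>m. m \<in> L \<Longrightarrow> norm (x - l) \<le> norm (x - m)"
    and "norm (x - l) \<le> covering_radius L"
proof -
  obtain l where l: "l \<in> L" "\<And>m. m \<in> L \<Longrightarrow> norm (x - l) \<le> norm (x - m)"
    using distance_attains_inf[OF closed_lattice, of x] lattice_zero by (auto simp: dist_norm)
  obtain R where R: "\<And>y. \<exists>m\<in>L. norm (y - m) \<le> R"
    using lattice_bounded_distance by blast
  have bdd: "bdd_below ((\<lambda>m. norm (y - m)) ` L)" for y
    by (rule bdd_belowI2[of _ 0]) simp
  have "(INF m\<in>L. norm (y - m)) \<le> R" for y
  proof -
    obtain m where "m \<in> L" "norm (y - m) \<le> R"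
      using R by blast
    then show ?thesis
      by (rule cINF_lower2[OF bdd])
  qed
  then have bdd_radius: "bdd_above (range (\<lambda>y. INF m\<in>L. norm (y - m)))"
    by (intro bdd_aboveI2)
  have "norm (x - l) \<le> (INF m\<in>L. norm (x - m))"
    using l lattice_zero by (intro cINF_greatest) auto
  also have "\<dots> \<le> covering_radius L"
    unfolding covering_radius_def by (rule cSUP_upper[OF UNIV_I bdd_radius])
  finally show thesis
    using that l by blast
qed

lemma lattice_neq_UNIV: "L \<noteq> UNIV"
proof
  assume "L = UNIV"
  then have "finite (ball (0::real^'n) 1)"
    using finite_lattice_Int_bounded[of "ball 0 1"] by simp
  moreover have "infinite (ball (0::real^'n) 1)"
    using islimpt_UNIV[of "0::real^'n"] by (simp add: islimpt_eq_infinite_ball)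
  ultimately show False
    by contradiction
qed

lemma covering_radius_pos: "0 < covering_radius L"
proof -
  obtain x where "x \<notin> L"
    using lattice_neq_UNIV by blast
  moreover obtain l where "l \<in> L" "norm (x - l) \<le> covering_radius L"
    using nearest_lattice_point by blast
  ultimately have "0 < norm (x - l)"
    by auto
  then show ?thesis
    using \<open>norm (x - l) \<le> covering_radius L\<close> by linarith
qed

lemma voronoi_cell_subset_cball: "voronoi_cell L \<subseteq> cball 0 (covering_radius L)"
proof
  fix v assume v: "v \<in> voronoi_cell L"
  obtain l where "l \<in> L" "norm (v - l) \<le> covering_radius L"
    using nearest_lattice_point by blast
  moreover have "norm v \<le> norm (v - l)"
    using v \<open>l \<in> L\<close> by (simp add: voronoi_cell_def)
  ultimately show "v \<in> cball 0 (covering_radius L)"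
    by simp
qed

lemma lmeasurable_voronoi_cell: "voronoi_cell L \<in> lmeasurable"
proof -
  have "voronoi_cell L = (\<Inter>l\<in>L. {v. norm v \<le> norm (v - l)})"
    by (auto simp: voronoi_cell_def)
  moreover have "closed {v::real^'n. norm v \<le> norm (v - l)}" for l
    by (intro closed_Collect_le continuous_intros)
  ultimately have "closed (voronoi_cell L)"
    by (simp add: closed_INT)
  moreover have "bounded (voronoi_cell L)"
    using bounded_cball voronoi_cell_subset_cball by (rule bounded_subset)
  ultimately show ?thesis
    by (simp add: lmeasurable_compact compact_eq_bounded_closed)
qed

lemma strict_voronoi_cell_subset: "strict_voronoi_cell L \<subseteq> voronoi_cell L"
  by (force simp: strict_voronoi_cell_def voronoi_cell_def)

text \<open>Points of the cell off the strict cell lie on one of countably many bisecting hyperplanes.\<close>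
lemma negligible_voronoi_boundary: "negligible (voronoi_cell L - strict_voronoi_cell L)"
proof (rule negligible_subset)
  show "negligible (\<Union>l\<in>L - {0}. {v. (2 *\<^sub>R l) \<bullet> v = l \<bullet> l})"
  proof (rule negligible_countable_Union)
    show "countable ((\<lambda>l. {v. (2 *\<^sub>R l) \<bullet> v = l \<bullet> l}) ` (L - {0}))"
      by (simp add: countable_lattice)
    show "negligible S" if "S \<in> (\<lambda>l. {v. (2 *\<^sub>R l) \<bullet> v = l \<bullet> l}) ` (L - {0})" for S
      using that negligible_hyperplane[of "2 *\<^sub>R l" "l \<bullet> l" for l] by auto
  qed
  show "voronoi_cell L - strict_voronoi_cell L \<subseteq> (\<Union>l\<in>L - {0}. {v. (2 *\<^sub>R l) \<bullet> v = l \<bullet> l})"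
  proof
    fix v assume v: "v \<in> voronoi_cell L - strict_voronoi_cell L"
    then obtain l where l: "l \<in> L - {0}" "\<not> norm v < norm (v - l)"
      by (auto simp: strict_voronoi_cell_def)
    moreover have "norm v \<le> norm (v - l)"
      using v l by (simp add: voronoi_cell_def)
    ultimately have "norm v = norm (v - l)"
      by simp
    then have "v \<bullet> v = (v - l) \<bullet> (v - l)"
      by (metis norm_eq)
    then have "(2 *\<^sub>R l) \<bullet> v = l \<bullet> l"
      by (simp add: inner_diff_left inner_diff_right inner_commute)
    then show "v \<in> (\<Union>l\<in>L - {0}. {v. (2 *\<^sub>R l) \<bullet> v = l \<bullet> l})"
      using l by blast
  qed
qed

lemma strict_voronoi_cell_measure:
  shows "strict_voronoi_cell L \<in> lmeasurable"
    and "measure lebesgue (strict_voronoi_cell L) = measure lebesgue (voronoi_cell L)"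
proof -
  have "strict_voronoi_cell L - voronoi_cell L = {}"
    using strict_voronoi_cell_subset by blast
  then have N: "negligible ((voronoi_cell L - strict_voronoi_cell L) \<union> (strict_voronoi_cell L - voronoi_cell L))"
    using negligible_voronoi_boundary by simp
  show "strict_voronoi_cell L \<in> lmeasurable"
    by (rule lmeasurable_negligible_symdiff[OF lmeasurable_voronoi_cell N])
  show "measure lebesgue (strict_voronoi_cell L) = measure lebesgue (voronoi_cell L)"
    by (rule measure_negligible_symdiff[OF lmeasurable_voronoi_cell N])
qed

lemma lattice_translate_into_voronoi_cell: "\<exists>l\<in>L. x - l \<in> voronoi_cell L"
proof -
  obtain l where l: "l \<in> L" "\<And>m. m \<in> L \<Longrightarrow> norm (x - l) \<le> norm (x - m)"
    using nearest_lattice_point by blast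
  then have "norm (x - l) \<le> norm (x - l - m)" if "m \<in> L" for m
    using lattice_add[OF l(1) that] by (simp add: algebra_simps)
  then show ?thesis
    using l(1) by (auto simp: voronoi_cell_def)
qed

lemma disjoint_strict_voronoi_translates:
  assumes "s \<in> L" "t \<in> L" "s \<noteq> t"
  shows "disjnt ((+) s ` strict_voronoi_cell L) ((+) t ` strict_voronoi_cell L)"
proof -
  have closer: "norm (x - a) < norm (x - c)"
    if "a \<in> L" "c \<in> L" "a \<noteq> c" "x - a \<in> strict_voronoi_cell L" for x a c
  proof -
    have "c - a \<in> L - {0}"
      using that lattice_diff by auto
    then have "norm (x - a) < norm (x - a - (c - a))"
      using that(4) unfolding strict_voronoi_cell_def by blast
    then show ?thesis
      by simp
  qed
  show ?thesis
    unfolding disjnt_def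
  proof (rule equals0I)
    fix x assume "x \<in> (+) s ` strict_voronoi_cell L \<inter> (+) t ` strict_voronoi_cell L"
    moreover have "x - a \<in> strict_voronoi_cell L" if "x \<in> (+) a ` strict_voronoi_cell L" for a
      using that by auto
    ultimately have "x - s \<in> strict_voronoi_cell L" "x - t \<in> strict_voronoi_cell L"
      by auto
    then show False
      using closer[of s t x] closer[of t s x] assms by auto
  qed
qed

lemma voronoi_cell_component_bound: "v \<in> voronoi_cell L \<Longrightarrow> \<bar>v$j\<bar> \<le> covering_radius L"
  using voronoi_cell_subset_cball component_le_norm_cart[of v j] by fastforce

lemma measure_voronoi_cell_le: "measure lebesgue (voronoi_cell L) \<le> (2 * covering_radius L) ^ CARD('n)"
proof -
  define \<nu> where "\<nu> = covering_radius L"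
  have "voronoi_cell L \<subseteq> cbox (\<chi> j. - \<nu>) (\<chi> j. \<nu>)"
  proof
    fix v assume "v \<in> voronoi_cell L"
    then have "- \<nu> \<le> v$j \<and> v$j \<le> \<nu>" for j
      using voronoi_cell_component_bound[of v j] unfolding \<nu>_def by linarith
    then show "v \<in> cbox (\<chi> j. - \<nu>) (\<chi> j. \<nu>)"
      by (simp add: mem_box_cart abs_le_iff)
  qed
  then have "measure lebesgue (voronoi_cell L) \<le> measure lebesgue (cbox (\<chi> j. - \<nu>) (\<chi> j. \<nu>) :: (real^'n) set)"
    by (intro measure_mono_fmeasurable) (auto intro: fmeasurableD lmeasurable_voronoi_cell)
  also have "\<dots> = (2 * \<nu>) ^ CARD('n)"
    using covering_radius_pos by (simp add: content_cbox_cart interval_ne_empty_cart \<nu>_def)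
  finally show ?thesis
    by (simp add: \<nu>_def)
qed

section \<open>Lattice points in a box\<close>

lemma finite_box_lattice_points: "finite (box_lattice_points L B)"
proof -
  have "box_lattice_points L B \<subseteq> L \<inter> cbox 0 (\<chi> j. B)"
    by (auto simp: box_lattice_points_def mem_box_cart less_imp_le)
  then show ?thesis
    using finite_lattice_Int_bounded[OF bounded_cbox] by (rule finite_subset)
qed

text \<open>The translates of the Voronoi cell by the box points cover the box shrunk by \<open>\<nu>\<close> on each side.\<close>
lemma box_volume_le_card_box_lattice_points:
  assumes "2 * covering_radius L < B"
  shows "(B - 2 * covering_radius L) ^ CARD('n) \<le> card (box_lattice_points L B) * measure lebesgue (voronoi_cell L)"
proof -
  define \<nu> where "\<nu> = covering_radius L"
  define W :: "(real^'n) set" where "W = box (\<chi> j. \<nu>) (\<chi> j. B - \<nu>)"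
  define U where "U = (\<Union>s\<in>box_lattice_points L B. (+) s ` voronoi_cell L)"
  have "W \<subseteq> U"
  proof
    fix x assume x: "x \<in> W"
    obtain l where l: "l \<in> L" "x - l \<in> voronoi_cell L"
      using lattice_translate_into_voronoi_cell by blast
    have "0 \<le> l$j \<and> l$j < B" for j
    proof -
      have "\<bar>x$j - l$j\<bar> \<le> \<nu>"
        using voronoi_cell_component_bound[OF l(2), of j] by (simp add: \<nu>_def)
      moreover have "\<nu> < x$j" "x$j < B - \<nu>"
        using x by (simp_all add: W_def mem_box_cart)
      ultimately show ?thesis
        by linarith
    qed
    then have "l \<in> box_lattice_points L B"
      using l(1) by (simp add: box_lattice_points_def)
    then show "x \<in> U"
      using l(2) unfolding U_def by (force intro: image_eqI[of x _ "x - l"])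
  qed
  moreover have "U \<in> lmeasurable"
    unfolding U_def
    by (intro fmeasurable.finite_UN finite_box_lattice_points measurable_translation lmeasurable_voronoi_cell)
  ultimately have "measure lebesgue W \<le> measure lebesgue U"
    by (intro measure_mono_fmeasurable) (auto simp: W_def)
  also have "\<dots> \<le> (\<Sum>s\<in>box_lattice_points L B. measure lebesgue ((+) s ` voronoi_cell L))"
    unfolding U_def
    by (intro measure_UNION_le finite_box_lattice_points fmeasurableD measurable_translation
        lmeasurable_voronoi_cell)
  also have "\<dots> = card (box_lattice_points L B) * measure lebesgue (voronoi_cell L)"
    by (simp add: measure_translation)
  finally have "measure lebesgue W \<le> card (box_lattice_points L B) * measure lebesgue (voronoi_cell L)" .
  moreover have "measure lebesgue W = measure lebesgue (cbox (\<chi> j. \<nu>) (\<chi> j. B - \<nu>) :: (real^'n) set)"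
    by (simp add: W_def measure_completion measure_lborel_box_eq measure_lborel_cbox_eq)
  moreover have "\<dots> = (B - 2 * \<nu>) ^ CARD('n)"
    using assms by (simp add: content_cbox_cart interval_ne_empty_cart \<nu>_def)
  ultimately show ?thesis
    by (simp add: \<nu>_def)
qed

lemma measure_voronoi_cell_pos: "0 < measure lebesgue (voronoi_cell L)"
proof -
  have "0 < covering_radius L ^ CARD('n)"
    using covering_radius_pos by simp
  also have "\<dots> \<le> card (box_lattice_points L (3 * covering_radius L)) * measure lebesgue (voronoi_cell L)"
    using box_volume_le_card_box_lattice_points[of "3 * covering_radius L"] covering_radius_pos by simp
  finally show ?thesis
    using measure_nonneg[of lebesgue "voronoi_cell L"] by (simp add: zero_less_mult_iff)
qed

lemma measure_strict_voronoi_translates: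
  assumes "finite P" and "P \<subseteq> L"
  shows "(\<Union>s\<in>P. (+) s ` strict_voronoi_cell L) \<in> lmeasurable"
    and "measure lebesgue (\<Union>s\<in>P. (+) s ` strict_voronoi_cell L) = card P * measure lebesgue (voronoi_cell L)"
proof -
  show "(\<Union>s\<in>P. (+) s ` strict_voronoi_cell L) \<in> lmeasurable"
    by (intro fmeasurable.finite_UN assms(1) measurable_translation strict_voronoi_cell_measure)
  have "measure lebesgue (\<Union>s\<in>P. (+) s ` strict_voronoi_cell L)
      = (\<Sum>s\<in>P. measure lebesgue ((+) s ` strict_voronoi_cell L))"
  proof (rule measure_UNION'[OF assms(1)])
    show "(+) s ` strict_voronoi_cell L \<in> lmeasurable" for s
      by (intro measurable_translation strict_voronoi_cell_measure)
    show "pairwise (\<lambda>s t. disjnt ((+) s ` strict_voronoi_cell L) ((+) t ` strict_voronoi_cell L)) P"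
      using assms(2) by (auto simp: pairwise_def intro: disjoint_strict_voronoi_translates)
  qed
  then show "measure lebesgue (\<Union>s\<in>P. (+) s ` strict_voronoi_cell L) = card P * measure lebesgue (voronoi_cell L)"
    by (simp add: measure_translation strict_voronoi_cell_measure)
qed

lemma box_lattice_point_plus_voronoi_in_slab:
  assumes "s \<in> box_lattice_points L B" and "u \<bullet> s = 0" and "v \<in> voronoi_cell L"
  shows "(\<forall>j. - covering_radius L \<le> (s + v)$j \<and> (s + v)$j \<le> B + covering_radius L)
           \<and> \<bar>u \<bullet> (s + v)\<bar> \<le> covering_radius L * norm u"
proof -
  have "\<bar>u \<bullet> (s + v)\<bar> = \<bar>u \<bullet> v\<bar>"
    using assms(2) by (simp add: inner_add_right)
  also have "\<dots> \<le> norm u * norm v"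
    by (rule Cauchy_Schwarz_ineq2)
  also have "\<dots> \<le> norm u * covering_radius L"
    using assms(3) voronoi_cell_subset_cball by (intro mult_left_mono) auto
  finally have "\<bar>u \<bullet> (s + v)\<bar> \<le> covering_radius L * norm u"
    by (simp add: mult.commute)
  moreover have "- covering_radius L \<le> (s + v)$j \<and> (s + v)$j \<le> B + covering_radius L" for j
  proof -
    have "0 \<le> s$j" "s$j < B"
      using assms(1) by (simp_all add: box_lattice_points_def)
    moreover have "\<bar>v$j\<bar> \<le> covering_radius L"
      using assms(3) by (rule voronoi_cell_component_bound)
    ultimately show ?thesis
      by simp linarith
  qed
  ultimately show ?thesis
    by blast
qed

text \<open>The disjoint translates of the strict Voronoi cell by the box points in \<open>W \<subseteq> u\<^sup>\<perp>\<close>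
  all lie in the slab \<open>|u \<bullet> y| \<le> \<nu> \<parallel>u\<parallel>\<close>, whose volume is measured along a dominant
  coordinate of \<open>u\<close>.\<close>
lemma card_box_lattice_points_proper_subspace:
  assumes "dim W < CARD('n)" and "0 \<le> B"
  shows "card (box_lattice_points L B \<inter> W) * measure lebesgue (voronoi_cell L)
           \<le> 2 * sqrt (real CARD('n)) * covering_radius L * (B + 2 * covering_radius L) ^ (CARD('n) - 1)"
proof -
  define \<nu> where "\<nu> = covering_radius L"
  define P where "P = box_lattice_points L B \<inter> W"
  obtain u where u: "u \<noteq> 0" "\<And>w. w \<in> span W \<Longrightarrow> orthogonal u w"
    using orthogonal_to_subspace_exists[of W] assms(1) by auto
  obtain i where i: "u$i \<noteq> 0" "norm u \<le> sqrt (real CARD('n)) * \<bar>u$i\<bar>"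
    using exists_dominant_component[OF u(1)] by blast
  define A where "A = {y. (\<forall>j. - \<nu> \<le> y$j \<and> y$j \<le> B + \<nu>) \<and> \<bar>u \<bullet> y\<bar> \<le> \<nu> * norm u}"
  have \<nu>: "0 < \<nu>"
    using covering_radius_pos by (simp add: \<nu>_def)
  have P: "finite P" "P \<subseteq> L"
    by (simp_all add: P_def finite_box_lattice_points) (auto simp: box_lattice_points_def)
  have slab: "A \<in> lmeasurable" "\<bar>u$i\<bar> * measure lebesgue A \<le> 2 * (\<nu> * norm u) * (B + 2 * \<nu>) ^ (CARD('n) - 1)"
    using measure_slab[OF i(1), of "- \<nu>" "B + \<nu>" "\<nu> * norm u"] \<nu> assms(2)
    by (simp_all add: A_def add.commute)
  have "(\<Union>s\<in>P. (+) s ` strict_voronoi_cell L) \<subseteq> A"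
  proof
    fix y assume "y \<in> (\<Union>s\<in>P. (+) s ` strict_voronoi_cell L)"
    then obtain s v where sv: "s \<in> P" "v \<in> strict_voronoi_cell L" "y = s + v"
      by blast
    moreover have "u \<bullet> s = 0"
      using sv(1) u(2) span_base by (auto simp: P_def orthogonal_def)
    ultimately show "y \<in> A"
      using box_lattice_point_plus_voronoi_in_slab[of s B u v] strict_voronoi_cell_subset
      by (auto simp: A_def P_def \<nu>_def)
  qed
  then have "card P * measure lebesgue (voronoi_cell L) \<le> measure lebesgue A"
    using measure_strict_voronoi_translates[OF P] slab(1) by (metis measure_mono_fmeasurable fmeasurableD)
  then have "\<bar>u$i\<bar> * (card P * measure lebesgue (voronoi_cell L)) \<le> \<bar>u$i\<bar> * measure lebesgue A"
    by (rule mult_left_mono) simp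
  also have "\<dots> \<le> 2 * (\<nu> * norm u) * (B + 2 * \<nu>) ^ (CARD('n) - 1)"
    by (rule slab(2))
  also have "\<dots> \<le> 2 * (\<nu> * (sqrt (real CARD('n)) * \<bar>u$i\<bar>)) * (B + 2 * \<nu>) ^ (CARD('n) - 1)"
    using i(2) \<nu> assms(2) by (intro mult_right_mono mult_left_mono) auto
  also have "\<dots> = \<bar>u$i\<bar> * (2 * sqrt (real CARD('n)) * \<nu> * (B + 2 * \<nu>) ^ (CARD('n) - 1))"
    by (simp add: algebra_simps)
  finally show ?thesis
    using i(1) by (simp add: P_def \<nu>_def)
qed

lemma card_nonspanning_box_tuples:
  assumes B: "8 * real CARD('n) powr (real CARD('n) / 2) * covering_radius L \<le> B"
  shows "real (card {y :: 'n \<Rightarrow> real^'n. (\<forall>i. y i \<in> box_lattice_points L B) \<and> span (range y) \<noteq> UNIV})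
           \<le> real (card (box_lattice_points L B)) ^ CARD('n) / 2"
proof -
  define \<nu> where "\<nu> = covering_radius L"
  define n where "n = CARD('n)"
  define m where "m = measure lebesgue (voronoi_cell L)"
  define S where "S = box_lattice_points L B"
  define r where "r = 2 * sqrt (real n) * \<nu> * (B + 2 * \<nu>) ^ (n - 1) / m"
  have \<nu>: "0 < \<nu>"
    by (simp add: \<nu>_def covering_radius_pos)
  have n: "1 \<le> n"
    by (simp add: n_def Suc_le_eq)
  have "1 \<le> real n powr (real n / 2)"
    using n by (intro ge_one_powr_ge_zero) auto
  then have "8 * \<nu> \<le> 8 * real n powr (real n / 2) * \<nu>"
    using \<nu> mult_right_mono[of 1 "real n powr (real n / 2)" "8 * \<nu>"] by (simp add: mult_ac)
  then have "2 * \<nu> < B"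
    using B \<nu> unfolding \<nu>_def n_def by linarith
  then have lower: "(B - 2 * \<nu>) ^ n \<le> card S * m"
    using box_volume_le_card_box_lattice_points by (simp add: \<nu>_def n_def m_def S_def)
  have m: "0 < m"
    by (simp add: m_def measure_voronoi_cell_pos)
  have "real (card (S \<inter> W)) \<le> r" if "dim W < CARD('n)" for W
    using card_box_lattice_points_proper_subspace[OF that, of B] \<open>2 * \<nu> < B\<close> \<nu> m
    by (simp add: r_def pos_le_divide_eq S_def \<nu>_def n_def m_def)
  then have "real (card {y :: 'n \<Rightarrow> real^'n. (\<forall>i. y i \<in> S) \<and> span (range y) \<noteq> UNIV})
      \<le> real (card S) ^ (n - 1) * (1 + real (n - 1) * r)"
    unfolding n_def by (intro card_nonspanning_tuples) (simp_all add: S_def finite_box_lattice_points)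
  also have "\<dots> \<le> real (card S) ^ (n - 1) * (real (card S) / 2)"
  proof (intro mult_left_mono)
    have "m * (1 + real (n - 1) * r) = m + real (n - 1) * (2 * sqrt (real n) * \<nu> * (B + 2 * \<nu>) ^ (n - 1))"
      using m by (simp add: r_def field_simps)
    also have "\<dots> \<le> (2 * \<nu>) ^ n + real (n - 1) * (2 * sqrt (real n) * \<nu> * (B + 2 * \<nu>) ^ (n - 1))"
      using measure_voronoi_cell_le by (simp add: m_def \<nu>_def n_def)
    also have "\<dots> \<le> (B - 2 * \<nu>) ^ n / 2"
      using lattice_count_inequality[OF n \<nu>] B by (simp add: \<nu>_def n_def)
    also have "\<dots> \<le> m * (real (card S) / 2)"
      using lower by (simp add: mult.commute)
    finally show "1 + real (n - 1) * r \<le> real (card S) / 2"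
      using m by simp
  qed simp
  also have "\<dots> = real (card S) ^ n / 2"
    using n by (simp add: power_eq_if)
  finally show ?thesis
    by (simp add: S_def n_def)
qed

end

theorem corollary2p3:
  fixes L :: "(real^'n) set" and B :: real
  assumes "full_rank_lattice L"
    and "B \<ge> 8 * real CARD('n) powr (real CARD('n) / 2) * covering_radius L"
  defines "S \<equiv> {v \<in> L. \<forall>j. 0 \<le> v $ j \<and> v $ j < B}"
  defines "X \<equiv> {y :: 'n \<Rightarrow> real^'n. \<forall>i. y i \<in> S}"
  defines "Y \<equiv> {y \<in> X. span (range y) = UNIV}"
  shows "real (card Y) \<ge> real (card X) / 2"
proof -
  have S: "S = box_lattice_points L B"
    by (simp add: S_def box_lattice_points_def)
  have "X = PiE UNIV (\<lambda>_. S)"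
    by (simp add: X_def PiE_UNIV_domain Pi_def)
  then have finX: "finite X" and cardX: "card X = card S ^ CARD('n)"
    using finite_box_lattice_points[OF assms(1)] by (simp_all add: S finite_PiE card_PiE)
  have "X - Y = {y. (\<forall>i. y i \<in> box_lattice_points L B) \<and> span (range y) \<noteq> UNIV}"
    by (auto simp: X_def Y_def S)
  then have "real (card (X - Y)) \<le> real (card X) / 2"
    using card_nonspanning_box_tuples[OF assms(1,2)] by (simp add: cardX S)
  moreover have "card (X - Y) = card X - card Y" and "card Y \<le> card X"
    using finX by (auto simp: Y_def card_Diff_subset card_mono intro: finite_subset)
  ultimately show ?thesis
    by simp
qed

end
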